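(* Let $f^*(\mathbf x)=f_1(x_1)+f_2(x_2)+\cdots+f_m(x_m)$ for non-constant univariate functions $f_1,\dots,f_m$ on $\{1,\dots,B\}$, with $m\le d$. Then for any $l<m$ we have $\dim_l(f^* )>\dim_m(f^* )$, while for any $l\ge m$ we have $$\dim_l(f^* )=\dim_m(f^* )=\sum_{i=1}^m\dim_1(f_i)-m+1.$$
   Context: $\mathcal X=\{1,\dots,B\}^d$ with a full-support probability measure $\nu$. A tree structure is a finite rooted binary tree with axis-aligned splitting rules $(v,t)$ at internal nodes (children $\{x_v\le t\}$, $\{x_v>t\}$ of the parent's cell, both nonempty); its leaves partition $\mathcal X$. For $l\ge1$, $\Omega_{\mathrm{TSE},l}$ is the set of $l$-tuples of tree structures (TSEs). For a TSE $\mathfrak E$, $\mathcal F(\mathfrak E)$ is the linear span (in $L^2(\nu)$) of the indicator functions of all leaves of all its trees and $\mathrm{df}(\mathfrak E)=\dim\mathcal F(\mathfrak E)$. For $f:\mathcal X\to\mathbb R$, $\dim_l(f)=\min\{\mathrm{df}(\mathfrak E):\mathfrak E\in\Omega_{\mathrm{TSE},l},\ f\in\mathcal F(\mathfrak E)\}$. For a univariate $f_i$, $\dim_1(f_i)$ means $\dim_1$ of $\mathbf x\mapsto f_i(x_i)$ (equal to the number of maximal constant pieces of $f_i$). *)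

theory Defs
  imports "HOL-Analysis.Analysis" "HOL-Library.Function_Algebras"
begin

text \<open>Points of the grid X = {1..B}^d are represented as functions nat => nat
  whose coordinates 1..d lie in {1..B} and which are 0 outside {1..d}.\<close>

definition grid :: "nat \<Rightarrow> nat \<Rightarrow> (nat \<Rightarrow> nat) set" where
  "grid d B = {x. (\<forall>i\<in>{1..d}. x i \<in> {1..B}) \<and> (\<forall>i. i \<notin> {1..d} \<longrightarrow> x i = 0)}"

text \<open>Tree structures: Node v t L R splits a cell C into {x in C. x v <= t}
  (left child L) and {x in C. x v > t} (right child R).\<close>

datatype tree = Leaf | Node nat nat tree tree

fun valid_tree :: "nat \<Rightarrow> (nat \<Rightarrow> nat) set \<Rightarrow> tree \<Rightarrow> bool" where
  "valid_tree d C Leaf = True"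
| "valid_tree d C (Node v t L R) =
     (v \<in> {1..d} \<and> {x\<in>C. x v \<le> t} \<noteq> {} \<and> {x\<in>C. x v > t} \<noteq> {} \<and>
      valid_tree d {x\<in>C. x v \<le> t} L \<and> valid_tree d {x\<in>C. x v > t} R)"

fun leaves :: "(nat \<Rightarrow> nat) set \<Rightarrow> tree \<Rightarrow> (nat \<Rightarrow> nat) set set" where
  "leaves C Leaf = {C}"
| "leaves C (Node v t L R) = leaves {x\<in>C. x v \<le> t} L \<union> leaves {x\<in>C. x v > t} R"

definition TSE :: "nat \<Rightarrow> nat \<Rightarrow> nat \<Rightarrow> tree list set" where
  "TSE d B l = {E. length E = l \<and> (\<forall>T\<in>set E. valid_tree d (grid d B) T)}"

definition fscale :: "real \<Rightarrow> ((nat \<Rightarrow> nat) \<Rightarrow> real) \<Rightarrow> ((nat \<Rightarrow> nat) \<Rightarrow> real)" where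
  "fscale c g = (\<lambda>x. c * g x)"

definition Fspace :: "nat \<Rightarrow> nat \<Rightarrow> tree list \<Rightarrow> ((nat \<Rightarrow> nat) \<Rightarrow> real) set" where
  "Fspace d B E = module.span fscale
     ((\<lambda>A. indicator A) ` (\<Union>T\<in>set E. leaves (grid d B) T))"

definition df :: "nat \<Rightarrow> nat \<Rightarrow> tree list \<Rightarrow> nat" where
  "df d B E = vector_space.dim fscale (Fspace d B E)"

text \<open>A function on X is identified with its restriction (0 outside X).\<close>

definition dimL :: "nat \<Rightarrow> nat \<Rightarrow> nat \<Rightarrow> ((nat \<Rightarrow> nat) \<Rightarrow> real) \<Rightarrow> nat" where
  "dimL d B l f = (LEAST n. \<exists>E\<in>TSE d B l.
      (\<lambda>x. if x \<in> grid d B then f x else 0) \<in> Fspace d B E \<and> df d B E = n)"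

end

theory Submission
  imports Defs
begin

text \<open>
  A function in the span F(E) of the leaf indicators of an ensemble E can take different values
  at adjacent grid points y and \<open>y + e\<^sub>w\<close> only if some node of E splits on a pair (w,c)
  whose cell contains both points. Processing the nodes top-down, every node whose split pair
  (v,t) has not been met before contributes the indicator of its left child: it jumps across (v,t)
  but otherwise only across pairs met before, hence it is independent of the functions collected
  so far. So df E exceeds the number of split pairs of E by at least one.

  For \<open>f* = f\<^sub>1(x\<^sub>1) + ... + f\<^sub>m(x\<^sub>m)\<close> every break b of \<open>f\<^sub>i\<close>
  (a point with \<open>f\<^sub>i b \<noteq> f\<^sub>i (b + 1)\<close>) has to be a split pair (i,b), which gives the
  lower bound 1 + (number of breaks); for l \<ge> m it is attained by the ensemble with one tree per
  coordinate cutting \<open>x\<^sub>i\<close> exactly at the breaks of \<open>f\<^sub>i\<close>. With l < m trees some tree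
  splits on two coordinates, so some node with split pair (j,b) lies below a split on another
  coordinate i. Putting \<open>x\<^sub>i\<close> on the other side of that split gives a point outside the
  node's cell at which f* still jumps across (j,b); the node responsible for this jump has the same
  split pair and contributes one more independent function.
\<close>

interpretation funs: vector_space fscale
  by unfold_locales (auto simp: fscale_def fun_eq_iff algebra_simps)

lemma (in vector_space) card_le_dim_if_independent:
  assumes "independent A" "A \<subseteq> V" "V \<subseteq> span W" "finite W"
  shows "card A \<le> dim V"
proof -
  obtain Bs where Bs: "Bs \<subseteq> V" "independent Bs" "V \<subseteq> span Bs" "card Bs = dim V"
    by (rule basis_exists)
  have "finite Bs"
    using independent_span_bound[OF assms(4) Bs(2)] Bs(1) assms(3) by blast
  then show ?thesis
    using independent_span_bound[OF _ assms(1)] assms(2) Bs by fastforce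
qed

lemma (in vector_space) dim_le_if_subset:
  assumes "S \<subseteq> V" "V \<subseteq> span W" "finite W"
  shows "dim S \<le> dim V"
proof -
  obtain Bs where "Bs \<subseteq> S" "independent Bs" "card Bs = dim S"
    by (rule basis_exists)
  then show ?thesis
    using card_le_dim_if_independent assms by (metis order_trans)
qed

lemma (in vector_space) dim_less_if_not_in_subspace:
  assumes "subspace S" "S \<subseteq> V" "h \<in> V" "h \<notin> S" "V \<subseteq> span W" "finite W"
  shows "dim S < dim V"
proof -
  obtain Bs where Bs: "Bs \<subseteq> S" "independent Bs" "S \<subseteq> span Bs" "card Bs = dim S"
    by (rule basis_exists)
  have "finite Bs"
    using independent_span_bound[OF assms(6) Bs(2)] Bs(1) assms(2,5) by blast
  have "span Bs \<subseteq> S"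
    using span_minimal[OF Bs(1) assms(1)] .
  then have h: "h \<notin> span Bs" "h \<notin> Bs"
    using assms(4) span_base by auto
  then have "independent (insert h Bs)"
    using Bs(2) by (simp add: independent_insert)
  then have "card (insert h Bs) \<le> dim V"
    using card_le_dim_if_independent Bs(1) assms(2,3,5,6) by (metis insert_subset order_trans)
  then show ?thesis
    using h \<open>finite Bs\<close> Bs(4) by simp
qed

lemma sum_apply: "(sum f A) x = (\<Sum>a\<in>A. f a x)"
  by (induction A rule: infinite_finite_induct) auto

section \<open>Grid points\<close>

lemma grid_coord: "x \<in> grid d B \<Longrightarrow> i \<in> {1..d} \<Longrightarrow> 1 \<le> x i \<and> x i \<le> B"
  unfolding grid_def by auto

definition grid_corner :: "nat \<Rightarrow> nat \<Rightarrow> nat" where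
  "grid_corner d = (\<lambda>k. if k \<in> {1..d} then 1 else 0)"

lemma grid_corner_in_grid: "1 \<le> B \<Longrightarrow> grid_corner d \<in> grid d B"
  unfolding grid_corner_def grid_def by auto

lemma fun_upd_in_grid: "x \<in> grid d B \<Longrightarrow> i \<in> {1..d} \<Longrightarrow> c \<in> {1..B} \<Longrightarrow> x(i:=c) \<in> grid d B"
  unfolding grid_def by auto

definition adjacent :: "nat \<Rightarrow> nat \<Rightarrow> nat \<Rightarrow> nat \<Rightarrow> (nat \<Rightarrow> nat) \<Rightarrow> bool" where
  "adjacent d B w c y \<longleftrightarrow> y \<in> grid d B \<and> y w = c \<and> y(w:=Suc c) \<in> grid d B"

lemma adjacent_bounds:
  assumes "adjacent d B w c y"
  shows "w \<in> {1..d}" "1 \<le> c" "c < B"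
proof -
  have y: "y \<in> grid d B" "y w = c" "y(w:=Suc c) \<in> grid d B"
    using assms unfolding adjacent_def by auto
  show "w \<in> {1..d}"
  proof (rule ccontr)
    assume "w \<notin> {1..d}"
    then have "(y(w:=Suc c)) w = 0"
      using y(3) unfolding grid_def by blast
    then show False
      by simp
  qed
  then have "y w \<in> {1..B}" "(y(w:=Suc c)) w \<in> {1..B}"
    using y(1,3) unfolding grid_def by blast+
  then show "1 \<le> c" "c < B"
    using y(2) by auto
qed

section \<open>Cells and nodes of a tree\<close>

text \<open>A path lists the splits from the root down to a node; an entry (v,t,s) records that the
  branch on which \<open>x v \<le> t\<close> has truth value s was taken.\<close>

type_synonym path = "(nat \<times> nat \<times> bool) list"

fun cell :: "(nat \<Rightarrow> nat) set \<Rightarrow> path \<Rightarrow> (nat \<Rightarrow> nat) set" where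
  "cell C [] = C"
| "cell C ((v,t,s)#a) = cell {x\<in>C. (x v \<le> t) = s} a"

definition path_splits :: "path \<Rightarrow> (nat \<times> nat) set" where
  "path_splits a = (\<lambda>(v,t,s). (v,t)) ` set a"

fun nodes :: "tree \<Rightarrow> (path \<times> nat \<times> nat) set" where
  "nodes Leaf = {}"
| "nodes (Node v t L R) = insert ([], v, t)
     ((\<lambda>(a,w,c). ((v,t,True)#a, w, c)) ` nodes L \<union> (\<lambda>(a,w,c). ((v,t,False)#a, w, c)) ` nodes R)"

lemma cell_subset: "cell C a \<subseteq> C"
  by (induction C a rule: cell.induct) auto

lemma path_splits_Cons [simp]: "path_splits ((v,t,s)#a) = insert (v,t) (path_splits a)"
  by (simp add: path_splits_def)

lemma cell_filter: "cell {x\<in>C. P x} a = {x\<in>cell C a. P x}"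
proof (induction C a rule: cell.induct)
  case (1 C)
  then show ?case by simp
next
  case (2 C v t s a)
  have "{x\<in>{x\<in>C. P x}. (x v \<le> t) = s} = {x\<in>{x\<in>C. (x v \<le> t) = s}. P x}"
    by blast
  then show ?case
    using "2.IH" by simp
qed

lemma cell_memD: "x \<in> cell C a \<Longrightarrow> (v,t,s) \<in> set a \<Longrightarrow> (x v \<le> t) = s"
proof (induction C a rule: cell.induct)
  case (2 C v' t' s' a)
  then show ?case
    using cell_subset by fastforce
qed simp

lemma cell_fun_upd_iff:
  assumes "(w,c) \<notin> path_splits a" "y w = c" "(y \<in> C) = (y(w:=Suc c) \<in> C)"
  shows "(y \<in> cell C a) = (y(w:=Suc c) \<in> cell C a)"
  using assms
proof (induction C a rule: cell.induct)
  case (1 C)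
  then show ?case by simp
next
  case (2 C v t s a)
  have "(v,t) \<noteq> (w,c)" "(w,c) \<notin> path_splits a"
    using "2.prems"(1) by auto
  then have "(y v \<le> t) = ((y(w:=Suc c)) v \<le> t)"
    using "2.prems"(2) by (cases "v = w") auto
  then have "(y \<in> {x\<in>C. (x v \<le> t) = s}) = (y(w:=Suc c) \<in> {x\<in>C. (x v \<le> t) = s})"
    unfolding mem_Collect_eq using "2.prems"(3) by blast
  then show ?case
    unfolding cell.simps(2) using "2.IH"[OF \<open>(w,c) \<notin> path_splits a\<close> "2.prems"(2)] by blast
qed

lemma adjacent_in_cell_not_split:
  assumes "z \<in> cell C a" "z(v:=Suc t) \<in> cell C a" "z v = t"
  shows "(v,t) \<notin> path_splits a"
  using assms
proof (induction C a rule: cell.induct)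
  case (1 C)
  then show ?case by (simp add: path_splits_def)
next
  case (2 C v' t' s a)
  have "(z v' \<le> t') = s" "((z(v:=Suc t)) v' \<le> t') = s"
    using "2.prems"(1,2) cell_subset[of "{x\<in>C. (x v' \<le> t') = s}" a] by auto
  then have "(v',t') \<noteq> (v,t)"
    using "2.prems"(3) by auto
  moreover have "(v,t) \<notin> path_splits a"
    using "2.IH"[OF "2.prems"(1,2)[unfolded cell.simps(2)] "2.prems"(3)] .
  ultimately show ?case
    by auto
qed

lemma finite_nodes: "finite (nodes T)"
  by (induction T) auto

lemma finite_leaves: "finite (leaves C T)"
  by (induction T arbitrary: C) auto

lemma leaves_subset: "L \<in> leaves C T \<Longrightarrow> L \<subseteq> C"
  by (induction T arbitrary: C) force+

lemma nodes_NodeE: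
  assumes "(a,w,c) \<in> nodes (Node v t L R)"
  obtains "a = []" "w = v" "c = t"
  | a' where "a = (v,t,True)#a'" "(a',w,c) \<in> nodes L"
  | a' where "a = (v,t,False)#a'" "(a',w,c) \<in> nodes R"
  using assms by auto

lemma nodes_prefix:
  assumes "(a,v,t) \<in> nodes T" "i < length a"
  shows "(take i a, fst (a!i), fst (snd (a!i))) \<in> nodes T"
  using assms
proof (induction T arbitrary: a i)
  case Leaf
  then show ?case by simp
next
  case (Node v0 t0 L R)
  from Node.prems(1) show ?case
  proof (cases rule: nodes_NodeE)
    case 1
    then show ?thesis using Node.prems(2) by simp
  next
    case (2 a')
    then show ?thesis
      using Node.IH(1)[of a' "i - 1"] Node.prems(2) by (cases i) force+
  next
    case (3 a')
    then show ?thesis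
      using Node.IH(2)[of a' "i - 1"] Node.prems(2) by (cases i) force+
  qed
qed

lemma separating_leaf_in_child:
  assumes "L \<in> leaves C T \<union> leaves C' T'" "C \<inter> C' = {}"
    and "y \<in> C" "y' \<in> C" "(y \<in> L) \<noteq> (y' \<in> L)"
  shows "L \<in> leaves C T"
proof (rule ccontr)
  assume "L \<notin> leaves C T"
  then have "L \<subseteq> C'"
    using assms(1) leaves_subset by blast
  then have "y \<notin> L" "y' \<notin> L"
    using assms(2-4) by blast+
  then show False
    using assms(5) by simp
qed

lemma separating_node:
  assumes "L \<in> leaves C T" "y \<in> C" "y' \<in> C" "(y \<in> L) \<noteq> (y' \<in> L)"
  shows "\<exists>a v t. (a,v,t) \<in> nodes T \<and> y \<in> cell C a \<and> y' \<in> cell C a \<and> (y v \<le> t) \<noteq> (y' v \<le> t)"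
  using assms
proof (induction T arbitrary: C)
  case Leaf
  then show ?case by simp
next
  case (Node v t Lt Rt)
  let ?Cl = "{x\<in>C. x v \<le> t}" and ?Cr = "{x\<in>C. t < x v}"
  have disjoint: "?Cl \<inter> ?Cr = {}"
    by auto
  consider "y \<in> ?Cl" "y' \<in> ?Cl" | "y \<in> ?Cr" "y' \<in> ?Cr" | "(y v \<le> t) \<noteq> (y' v \<le> t)"
    using Node.prems(2,3) by (cases "y v \<le> t"; cases "y' v \<le> t") auto
  then show ?case
  proof cases
    case 1
    have "L \<in> leaves ?Cl Lt"
      by (rule separating_leaf_in_child[where C' = ?Cr and T' = Rt, OF _ disjoint 1 Node.prems(4)])
        (use Node.prems(1) in simp)
    then obtain a w c where "(a,w,c) \<in> nodes Lt" "y \<in> cell ?Cl a" "y' \<in> cell ?Cl a"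
        "(y w \<le> c) \<noteq> (y' w \<le> c)"
      using Node.IH(1) 1 Node.prems(4) by blast
    then show ?thesis
      by (intro exI[where x = "(v,t,True)#a"]) force
  next
    case 2
    have "L \<in> leaves ?Cr Rt"
      by (rule separating_leaf_in_child[where C' = ?Cl and T' = Lt, OF _ _ 2 Node.prems(4)])
        (use Node.prems(1) disjoint in auto)
    then obtain a w c where "(a,w,c) \<in> nodes Rt" "y \<in> cell ?Cr a" "y' \<in> cell ?Cr a"
        "(y w \<le> c) \<noteq> (y' w \<le> c)"
      using Node.IH(2) 2 Node.prems(4) by blast
    then show ?thesis
      by (intro exI[where x = "(v,t,False)#a"]) (force simp: not_le)
  next
    case 3
    then show ?thesis
      using Node.prems(2,3) by (intro exI[where x = "[]"]) force
  qed
qed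

definition coord_convex :: "(nat \<Rightarrow> nat) set \<Rightarrow> bool" where
  "coord_convex C \<longleftrightarrow> (\<forall>x\<in>C. \<forall>x'\<in>C. \<forall>v c. x v \<le> c \<and> c \<le> x' v \<longrightarrow> x(v:=c) \<in> C)"

lemma coord_convex_grid: "coord_convex (grid d B)"
  unfolding coord_convex_def
proof (intro ballI allI impI)
  fix x x' v c
  assume x: "x \<in> grid d B" "x' \<in> grid d B" and c: "x v \<le> c \<and> c \<le> x' v"
  show "x(v:=c) \<in> grid d B"
  proof (cases "v \<in> {1..d}")
    case True
    then have "1 \<le> x v" "x' v \<le> B"
      using x unfolding grid_def by auto
    then have "1 \<le> c" "c \<le> B"
      using c by linarith+
    then show ?thesis
      using x(1) c True unfolding grid_def by auto
  next
    case False
    then have "c = x v"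
      using x c unfolding grid_def by force
    then show ?thesis
      using x(1) by simp
  qed
qed

lemma coord_convex_split:
  assumes "coord_convex C"
  shows "coord_convex {x\<in>C. (x v \<le> t) = s}"
  unfolding coord_convex_def
proof (intro ballI allI impI)
  fix x x' w c
  assume x: "x \<in> {x\<in>C. (x v \<le> t) = s}" "x' \<in> {x\<in>C. (x v \<le> t) = s}"
    and c: "x w \<le> c \<and> c \<le> x' w"
  then have "x(w:=c) \<in> C"
    using assms unfolding coord_convex_def by blast
  moreover have "((x(w:=c)) v \<le> t) = s"
    using x c by (cases "w = v"; cases s) auto
  ultimately show "x(w:=c) \<in> {x\<in>C. (x v \<le> t) = s}"
    by simp
qed

text \<open>Both children of a node of a valid tree are nonempty, so coordinate convexity yields a point
  of the node's cell with \<open>x v = t\<close> whose neighbour with \<open>x v = t + 1\<close> is also in the cell.\<close>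

lemma node_split_witness:
  assumes "valid_tree d C T" "coord_convex C" "(a,v,t) \<in> nodes T"
  shows "v \<in> {1..d} \<and> (\<exists>z\<in>cell C a. z v = t \<and> z(v:=Suc t) \<in> cell C a)"
  using assms
proof (induction T arbitrary: C a)
  case Leaf
  then show ?case by simp
next
  case (Node v0 t0 L R)
  from Node.prems(3) show ?case
  proof (cases rule: nodes_NodeE)
    case 1
    obtain x x' where x: "x \<in> C" "x v0 \<le> t0" and x': "x' \<in> C" "t0 < x' v0"
      using Node.prems(1) by auto
    then have "x(v0:=t0) \<in> C" "x(v0:=Suc t0) \<in> C"
      using Node.prems(2) unfolding coord_convex_def by auto
    then have "x(v0:=t0) \<in> cell C a" "(x(v0:=t0))(v0:=Suc t0) \<in> cell C a"
      using 1 by (simp_all only: fun_upd_upd cell.simps(1))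
    moreover have "(x(v0:=t0)) v0 = t0" "v0 \<in> {1..d}"
      using Node.prems(1) by simp_all
    ultimately show ?thesis
      using 1 by blast
  next
    case (2 a')
    then show ?thesis
      using Node.IH(1)[of "{x\<in>C. x v0 \<le> t0}" a'] Node.prems coord_convex_split[of C v0 t0 True]
      by simp
  next
    case (3 a')
    then show ?thesis
      using Node.IH(2)[of "{x\<in>C. t0 < x v0}" a'] Node.prems coord_convex_split[of C v0 t0 False]
      by (simp add: not_le)
  qed
qed

section \<open>Leaf spans\<close>

definition leaf_span :: "(nat \<Rightarrow> nat) set \<Rightarrow> tree \<Rightarrow> ((nat \<Rightarrow> nat) \<Rightarrow> real) set" where
  "leaf_span C T = funs.span ((\<lambda>A. indicator A) ` leaves C T)"

lemma leaf_span_children: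
  "leaf_span {x\<in>C. x v \<le> t} L \<subseteq> leaf_span C (Node v t L R)"
  "leaf_span {x\<in>C. t < x v} R \<subseteq> leaf_span C (Node v t L R)"
   apply (unfold leaf_span_def)
   apply (rule funs.span_mono, rule image_mono, simp)+
  done

lemma leaf_span_subset_Fspace:
  "T \<in> set E \<Longrightarrow> leaf_span (grid d B) T \<subseteq> Fspace d B E"
  unfolding leaf_span_def Fspace_def by (intro funs.span_mono image_mono) blast

lemma restriction_in_leaf_span:
  assumes "\<forall>L\<in>leaves C T. \<forall>x\<in>L. \<forall>x'\<in>L. g x = g x'"
  shows "(\<lambda>x. if x \<in> C then g x else 0) \<in> leaf_span C T"
  using assms
proof (induction T arbitrary: C)
  case Leaf
  have const: "\<forall>x\<in>C. \<forall>x'\<in>C. g x = g x'"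
    using Leaf.prems by (simp only: leaves.simps ball_simps simp_thms)
  define c where "c = (SOME c. c \<in> C)"
  have "(if x \<in> C then g x else 0) = fscale (g c) (indicator C) x" for x
  proof (cases "x \<in> C")
    case True
    then have "c \<in> C"
      unfolding c_def by (rule someI[where P = "\<lambda>c. c \<in> C"])
    then show ?thesis
      using True const[rule_format, of x c] by (simp add: fscale_def)
  qed (simp add: fscale_def)
  then have "(\<lambda>x. if x \<in> C then g x else 0) = fscale (g c) (indicator C)"
    by (rule ext)
  then show ?case
    by (simp add: leaf_span_def funs.span_base funs.span_scale)
next
  case (Node v t L R)
  have split: "(\<lambda>x. if x \<in> C then g x else 0) =
      (\<lambda>x. if x \<in> {x\<in>C. x v \<le> t} then g x else 0) + (\<lambda>x. if x \<in> {x\<in>C. t < x v} then g x else 0)"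
    by (auto simp: fun_eq_iff)
  note prems = Node.prems[unfolded leaves.simps ball_Un]
  have "(\<lambda>x. if x \<in> {x\<in>C. x v \<le> t} then g x else 0) \<in> leaf_span C (Node v t L R)"
    and "(\<lambda>x. if x \<in> {x\<in>C. t < x v} then g x else 0) \<in> leaf_span C (Node v t L R)"
    using subsetD[OF leaf_span_children(1) Node.IH(1)[OF prems[THEN conjunct1]]]
      subsetD[OF leaf_span_children(2) Node.IH(2)[OF prems[THEN conjunct2]]] .
  then show ?case
    unfolding split leaf_span_def by (rule funs.span_add)
qed

lemma indicator_in_leaf_span: "indicator C \<in> leaf_span C T"
proof -
  have "(\<lambda>x. if x \<in> C then 1 else 0) \<in> leaf_span C T"
    by (rule restriction_in_leaf_span) simp
  moreover have "indicator C = (\<lambda>x. if x \<in> C then 1 else 0 :: real)"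
    by (simp add: fun_eq_iff indicator_def)
  ultimately show ?thesis
    by simp
qed

lemma node_indicator_in_leaf_span:
  "(a,v,t) \<in> nodes T \<Longrightarrow> indicator {x\<in>cell C a. x v \<le> t} \<in> leaf_span C T"
proof (induction T arbitrary: C a)
  case Leaf
  then show ?case by simp
next
  case (Node v0 t0 L R)
  from Node.prems show ?case
  proof (cases rule: nodes_NodeE)
    case 1
    then show ?thesis
      using subsetD[OF leaf_span_children(1) indicator_in_leaf_span] by simp
  next
    case (2 a')
    then show ?thesis
      using subsetD[OF leaf_span_children(1) Node.IH(1)[OF 2(2)]] by simp
  next
    case (3 a')
    then show ?thesis
      using subsetD[OF leaf_span_children(2) Node.IH(2)[OF 3(2)]] by (simp add: not_le)
  qed
qed

section \<open>Jumps and split pairs of an ensemble\<close>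

text \<open>A triple (w,c,y) stands for the pair of adjacent grid points y and \<open>y(w := Suc c)\<close>.\<close>

definition jumps_in :: "nat \<Rightarrow> nat \<Rightarrow> (nat \<times> nat \<times> (nat \<Rightarrow> nat)) set \<Rightarrow> ((nat \<Rightarrow> nat) \<Rightarrow> real) set" where
  "jumps_in d B Q = {g. \<forall>w c y. adjacent d B w c y \<and> (w,c,y) \<notin> Q \<longrightarrow> g y = g (y(w:=Suc c))}"

definition jumps_at :: "(nat \<times> nat) set \<Rightarrow> (nat \<times> nat \<times> (nat \<Rightarrow> nat)) set" where
  "jumps_at P = {(w,c,y). (w,c) \<in> P}"

lemma subspace_jumps_in: "funs.subspace (jumps_in d B Q)"
  unfolding funs.subspace_def jumps_in_def by (auto simp: fscale_def)

lemma jumps_in_mono: "Q \<subseteq> Q' \<Longrightarrow> jumps_in d B Q \<subseteq> jumps_in d B Q'"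
  unfolding jumps_in_def by blast

type_synonym ens_node = "tree \<times> path \<times> nat \<times> nat"

definition ens_nodes :: "tree list \<Rightarrow> ens_node set" where
  "ens_nodes E = {(T,a,v,t). T \<in> set E \<and> (a,v,t) \<in> nodes T}"

definition split_pairs :: "ens_node set \<Rightarrow> (nat \<times> nat) set" where
  "split_pairs N = (\<lambda>(T,a,v,t). (v,t)) ` N"

definition ancestor_closed :: "ens_node set \<Rightarrow> bool" where
  "ancestor_closed N \<longleftrightarrow>
     (\<forall>(T,a,v,t)\<in>N. \<forall>i<length a. (T, take i a, fst (a!i), fst (snd (a!i))) \<in> N)"

lemma finite_ens_nodes: "finite (ens_nodes E)"
proof -
  have "ens_nodes E = (\<Union>T\<in>set E. (\<lambda>(a,v,t). (T,a,v,t)) ` nodes T)"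
    unfolding ens_nodes_def by auto
  then show ?thesis
    using finite_nodes by simp
qed

lemma ancestor_closed_ens_nodes: "ancestor_closed (ens_nodes E)"
  unfolding ancestor_closed_def
proof clarify
  fix T a v t i
  assume "(T,a,v,t) \<in> ens_nodes E" "i < length a"
  then show "(T, take i a, fst (a!i), fst (snd (a!i))) \<in> ens_nodes E"
    using nodes_prefix unfolding ens_nodes_def by blast
qed

lemma ancestor_closedD:
  assumes "ancestor_closed N" "(T,a,v,t) \<in> N" "i < length a"
  shows "(T, take i a, fst (a!i), fst (snd (a!i))) \<in> N"
proof -
  have "\<forall>i<length a. (T, take i a, fst (a!i), fst (snd (a!i))) \<in> N"
    using bspec[OF assms(1)[unfolded ancestor_closed_def] assms(2)] by simp
  then show ?thesis
    using assms(3) by blast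
qed

lemma split_pairsI: "(T,a,v,t) \<in> N \<Longrightarrow> (v,t) \<in> split_pairs N"
  using image_eqI[of "(v,t)" "\<lambda>(T,a,v,t). (v,t)" "(T,a,v,t)" N] by (simp add: split_pairs_def)

lemma split_pairsE:
  assumes "(v,t) \<in> split_pairs N"
  obtains T a where "(T,a,v,t) \<in> N"
  using assms unfolding split_pairs_def by auto

lemma finite_split_pairs: "finite N \<Longrightarrow> finite (split_pairs N)"
  unfolding split_pairs_def by (rule finite_imageI)

lemma ens_node_split_witness:
  assumes "\<forall>T\<in>set E. valid_tree d (grid d B) T" "(T,a,v,t) \<in> ens_nodes E"
  shows "\<exists>z\<in>cell (grid d B) a. adjacent d B v t z \<and> z(v:=Suc t) \<in> cell (grid d B) a"
proof -
  have "T \<in> set E" "(a,v,t) \<in> nodes T"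
    using assms(2) unfolding ens_nodes_def by simp_all
  then obtain z where z: "z \<in> cell (grid d B) a" "z v = t" "z(v:=Suc t) \<in> cell (grid d B) a"
    using node_split_witness[OF _ coord_convex_grid] assms(1) by blast
  then have "adjacent d B v t z"
    using cell_subset unfolding adjacent_def by blast
  with z show ?thesis
    by blast
qed

lemma Fspace_separating_leaf:
  assumes "g \<in> Fspace d B E" "g y \<noteq> g y'"
  shows "\<exists>T\<in>set E. \<exists>L\<in>leaves (grid d B) T. (y \<in> L) \<noteq> (y' \<in> L)"
proof (rule ccontr)
  assume "\<not> ?thesis"
  then have "(\<lambda>A. indicator A) ` (\<Union>T\<in>set E. leaves (grid d B) T) \<subseteq> {f. f y = f y'}"
    by (auto simp: indicator_def)
  moreover have "funs.subspace {f. f y = f y'}"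
    unfolding funs.subspace_def by (auto simp: fscale_def)
  ultimately have "Fspace d B E \<subseteq> {f. f y = f y'}"
    unfolding Fspace_def by (rule funs.span_minimal)
  then show False
    using assms by auto
qed

lemma Fspace_jump_at_node:
  assumes "g \<in> Fspace d B E" "adjacent d B w c y" "g y \<noteq> g (y(w:=Suc c))"
  shows "\<exists>T a. (T,a,w,c) \<in> ens_nodes E \<and> y \<in> cell (grid d B) a \<and> y(w:=Suc c) \<in> cell (grid d B) a"
proof -
  let ?y' = "y(w:=Suc c)"
  obtain T L where "T \<in> set E" "L \<in> leaves (grid d B) T" "(y \<in> L) \<noteq> (?y' \<in> L)"
    using Fspace_separating_leaf[where y = y and y' = ?y', OF assms(1,3)] by blast
  moreover have "y \<in> grid d B" "?y' \<in> grid d B" "y w = c"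
    using assms(2) unfolding adjacent_def by auto
  ultimately obtain a v t where node: "(a,v,t) \<in> nodes T"
      and inside: "y \<in> cell (grid d B) a" "?y' \<in> cell (grid d B) a"
      and sep: "(y v \<le> t) \<noteq> (?y' v \<le> t)"
    using separating_node by blast
  have "v = w"
    using sep by (metis fun_upd_other)
  have "(c \<le> t) \<noteq> (Suc c \<le> t)"
    using sep unfolding \<open>v = w\<close> fun_upd_same \<open>y w = c\<close> .
  then have "t = c"
    by (cases "c \<le> t") (auto simp: not_le)
  then show ?thesis
    using \<open>T \<in> set E\<close> node inside \<open>v = w\<close> unfolding ens_nodes_def by blast
qed

lemma node_indicator_jumps_in:
  "indicator {x\<in>cell (grid d B) a. x v \<le> t}
     \<in> jumps_in d B (jumps_at (path_splits a) \<union> {(v,t,y) | y. y \<in> cell (grid d B) a})"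
  unfolding jumps_in_def
proof (intro CollectI allI impI, elim conjE)
  fix w c y
  assume adj: "adjacent d B w c y"
    and out: "(w,c,y) \<notin> jumps_at (path_splits a) \<union> {(v,t,y) | y. y \<in> cell (grid d B) a}"
  have y: "y \<in> grid d B" "y w = c" "y(w:=Suc c) \<in> grid d B"
    using adj unfolding adjacent_def by auto
  have wc: "(w,c) \<notin> path_splits a"
    using out unfolding jumps_at_def by blast
  show "indicator {x\<in>cell (grid d B) a. x v \<le> t} y = indicator {x\<in>cell (grid d B) a. x v \<le> t} (y(w:=Suc c))"
  proof (cases "(w,c) = (v,t)")
    case True
    then have "y \<notin> cell (grid d B) a"
      using out by blast
    moreover have "(y \<in> cell (grid d B) a) = (y(w:=Suc c) \<in> cell (grid d B) a)"
      using cell_fun_upd_iff[of w c a y "grid d B"] wc y by blast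
    ultimately show ?thesis
      by (simp add: indicator_def)
  next
    case False
    then have "(w,c) \<notin> path_splits ((v,t,True)#a)"
      using wc by simp
    then have "(y \<in> cell (grid d B) ((v,t,True)#a)) = (y(w:=Suc c) \<in> cell (grid d B) ((v,t,True)#a))"
      using cell_fun_upd_iff[of w c "(v,t,True)#a" y "grid d B"] y by blast
    then show ?thesis
      by (simp add: indicator_def cell_filter)
  qed
qed

section \<open>Lower bounds for the number of degrees of freedom\<close>

definition jump_dim :: "nat \<Rightarrow> nat \<Rightarrow> tree list \<Rightarrow> (nat \<times> nat \<times> (nat \<Rightarrow> nat)) set \<Rightarrow> nat" where
  "jump_dim d B E Q = funs.dim (Fspace d B E \<inter> jumps_in d B Q)"

lemma finite_leaf_indicators:
  "finite ((\<lambda>A. indicator A :: (nat \<Rightarrow> nat) \<Rightarrow> real) ` (\<Union>T\<in>set E. leaves C T))"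
  using finite_leaves by simp

lemma jump_dim_le_df: "jump_dim d B E Q \<le> df d B E"
  unfolding jump_dim_def df_def
  by (rule funs.dim_le_if_subset[OF Int_lower1 _ finite_leaf_indicators[where E = E and C = "grid d B"]])
    (simp add: Fspace_def)

lemma jump_dim_less:
  assumes "Q \<subseteq> Q'" "h \<in> Fspace d B E" "h \<in> jumps_in d B Q'" "h \<notin> jumps_in d B Q"
  shows "jump_dim d B E Q < jump_dim d B E Q'"
  unfolding jump_dim_def
proof (rule funs.dim_less_if_not_in_subspace[OF _ _ _ _ _ finite_leaf_indicators[where E = E and C = "grid d B"]])
  show "funs.subspace (Fspace d B E \<inter> jumps_in d B Q)"
    unfolding Fspace_def by (intro funs.subspace_inter funs.subspace_span subspace_jumps_in)
  show "Fspace d B E \<inter> jumps_in d B Q \<subseteq> Fspace d B E \<inter> jumps_in d B Q'"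
    using jumps_in_mono[OF assms(1)] by blast
  show "h \<in> Fspace d B E \<inter> jumps_in d B Q'" "h \<notin> Fspace d B E \<inter> jumps_in d B Q"
    using assms(2-4) by simp_all
  show "Fspace d B E \<inter> jumps_in d B Q' \<subseteq> funs.span ((\<lambda>A. indicator A) ` (\<Union>T\<in>set E. leaves (grid d B) T))"
    unfolding Fspace_def by blast
qed

lemma jump_dim_pos:
  assumes "E \<noteq> []" "1 \<le> B"
  shows "0 < jump_dim d B E Q"
proof -
  obtain T where "T \<in> set E"
    using assms(1) by (cases E) auto
  then have "indicator (grid d B) \<in> Fspace d B E"
    using indicator_in_leaf_span leaf_span_subset_Fspace by blast
  moreover have "indicator (grid d B) \<in> jumps_in d B Q"
    unfolding jumps_in_def adjacent_def by (simp add: indicator_def)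
  moreover have "indicator (grid d B) \<noteq> (0 :: (nat \<Rightarrow> nat) \<Rightarrow> real)"
    using grid_corner_in_grid[OF assms(2), of d] by (auto simp: fun_eq_iff indicator_def)
  ultimately have "card {indicator (grid d B) :: (nat \<Rightarrow> nat) \<Rightarrow> real} \<le> jump_dim d B E Q"
    unfolding jump_dim_def
    by (intro funs.card_le_dim_if_independent[OF _ _ _ finite_leaf_indicators[where E = E and C = "grid d B"]])
      (auto simp: Fspace_def)
  then show ?thesis
    by simp
qed

lemma jump_dim_less_at_node:
  assumes node: "(T,a,v,t) \<in> ens_nodes E" and "Q \<subseteq> Q'"
    and Q': "jumps_at (path_splits a) \<union> {(v,t,y) | y. y \<in> cell (grid d B) a} \<subseteq> Q'"
    and z: "z \<in> cell (grid d B) a" "z v = t" "z(v:=Suc t) \<in> cell (grid d B) a" "(v,t,z) \<notin> Q"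
  shows "jump_dim d B E Q < jump_dim d B E Q'"
proof (rule jump_dim_less[OF \<open>Q \<subseteq> Q'\<close>])
  let ?h = "indicator {x\<in>cell (grid d B) a. x v \<le> t} :: (nat \<Rightarrow> nat) \<Rightarrow> real"
  have "T \<in> set E" "(a,v,t) \<in> nodes T"
    using node unfolding ens_nodes_def by simp_all
  then show "?h \<in> Fspace d B E"
    using node_indicator_in_leaf_span leaf_span_subset_Fspace by blast
  show "?h \<in> jumps_in d B Q'"
    using node_indicator_jumps_in jumps_in_mono[OF Q'] by blast
  have "adjacent d B v t z"
    using z(1-3) cell_subset unfolding adjacent_def by blast
  moreover have "?h z \<noteq> ?h (z(v:=Suc t))"
    using z(1,2) by (simp add: indicator_def)
  ultimately show "?h \<notin> jumps_in d B Q"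
    using z(4) unfolding jumps_in_def by blast
qed

lemma exists_node_with_split_ancestors:
  assumes "ancestor_closed N" "(T,a,v,t) \<in> N" "(v,t) \<notin> P"
  shows "\<exists>T a v t. (T,a,v,t) \<in> N \<and> (v,t) \<notin> P \<and> path_splits a \<subseteq> P"
  using assms(2,3)
proof (induction "length a" arbitrary: T a v t rule: less_induct)
  case less
  show ?case
  proof (cases "path_splits a \<subseteq> P")
    case True
    with less.prems show ?thesis
      by blast
  next
    case False
    then obtain v' t' s' where "(v',t',s') \<in> set a" "(v',t') \<notin> P"
      unfolding path_splits_def by auto
    then obtain i where i: "i < length a" "a!i = (v',t',s')"
      by (auto simp: in_set_conv_nth)
    then have "(T, take i a, v', t') \<in> N"
      using ancestor_closedD[OF assms(1) less.prems(1) i(1)] by simp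
    then show ?thesis
      using less.hyps[of "take i a"] i(1) \<open>(v',t') \<notin> P\<close> by simp
  qed
qed

lemma jump_dim_less_at_new_split:
  assumes valid: "\<forall>T\<in>set E. valid_tree d (grid d B) T"
    and N: "N \<subseteq> ens_nodes E" "ancestor_closed N" and new: "split_pairs N - P \<noteq> {}"
  obtains v t where "(v,t) \<in> split_pairs N - P"
    "jump_dim d B E (jumps_at P) < jump_dim d B E (jumps_at (insert (v,t) P))"
proof -
  obtain v0 t0 where "(v0,t0) \<in> split_pairs N" "(v0,t0) \<notin> P"
    using new by auto
  then obtain T0 a0 where "(T0,a0,v0,t0) \<in> N"
    by (auto elim: split_pairsE)
  then obtain T a v t where node: "(T,a,v,t) \<in> N" "(v,t) \<notin> P" "path_splits a \<subseteq> P"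
    using exists_node_with_split_ancestors[OF N(2)] \<open>(v0,t0) \<notin> P\<close> by blast
  have node_E: "(T,a,v,t) \<in> ens_nodes E"
    using node(1) N(1) by blast
  obtain z where z: "z \<in> cell (grid d B) a" "z v = t" "z(v:=Suc t) \<in> cell (grid d B) a"
    using ens_node_split_witness[OF valid node_E] unfolding adjacent_def by blast
  have "jump_dim d B E (jumps_at P) < jump_dim d B E (jumps_at (insert (v,t) P))"
    by (rule jump_dim_less_at_node[OF node_E _ _ z]) (use node(2,3) in \<open>auto simp: jumps_at_def\<close>)
  moreover have "(v,t) \<in> split_pairs N - P"
    using split_pairsI[OF node(1)] node(2) by blast
  ultimately show ?thesis
    by (rule that[rotated])
qed

lemma jump_dim_add_split_pairs:
  assumes valid: "\<forall>T\<in>set E. valid_tree d (grid d B) T"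
    and N: "finite N" "N \<subseteq> ens_nodes E" "ancestor_closed N"
  shows "jump_dim d B E (jumps_at P) + card (split_pairs N - P) \<le> jump_dim d B E (jumps_at (P \<union> split_pairs N))"
proof (induction "card (split_pairs N - P)" arbitrary: P)
  case 0
  then have "P \<union> split_pairs N = P"
    using finite_split_pairs[OF N(1)] by auto
  then show ?case
    using "0.hyps" by simp
next
  case (Suc k)
  have "split_pairs N - P \<noteq> {}"
  proof
    assume "split_pairs N - P = {}"
    with Suc.hyps(2) show False
      by simp
  qed
  then obtain v t where vt: "(v,t) \<in> split_pairs N - P"
      and less: "jump_dim d B E (jumps_at P) < jump_dim d B E (jumps_at (insert (v,t) P))"
    by (rule jump_dim_less_at_new_split[OF valid N(2,3)])
  have "split_pairs N - insert (v,t) P = (split_pairs N - P) - {(v,t)}"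
    by blast
  then have "card (split_pairs N - insert (v,t) P) = card (split_pairs N - P) - 1"
    using card_Diff_singleton[OF vt] by (simp only:)
  then have "card (split_pairs N - insert (v,t) P) = k"
    using Suc.hyps(2) by linarith
  moreover have "insert (v,t) P \<union> split_pairs N = P \<union> split_pairs N"
    using vt by blast
  ultimately have "jump_dim d B E (jumps_at (insert (v,t) P)) + k \<le> jump_dim d B E (jumps_at (P \<union> split_pairs N))"
    using Suc.hyps(1)[of "insert (v,t) P"] by simp
  then show ?case
    using less Suc.hyps(2) by linarith
qed

lemma jump_dim_ge_card_split_pairs:
  assumes "\<forall>T\<in>set E. valid_tree d (grid d B) T" "E \<noteq> []" "1 \<le> B"
    and "finite N" "N \<subseteq> ens_nodes E" "ancestor_closed N"
  shows "1 + card (split_pairs N) \<le> jump_dim d B E (jumps_at (split_pairs N))"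
proof -
  have "jump_dim d B E (jumps_at {}) + card (split_pairs N - {}) \<le> jump_dim d B E (jumps_at ({} \<union> split_pairs N))"
    by (rule jump_dim_add_split_pairs[OF assms(1,4-6)])
  moreover have "0 < jump_dim d B E (jumps_at {})"
    using jump_dim_pos[OF assms(2,3)] .
  ultimately show ?thesis
    by simp
qed

lemma df_ge_card_split_pairs:
  assumes "\<forall>T\<in>set E. valid_tree d (grid d B) T" "E \<noteq> []" "1 \<le> B"
  shows "1 + card (split_pairs (ens_nodes E)) \<le> df d B E"
  using jump_dim_ge_card_split_pairs[OF assms finite_ens_nodes order_refl ancestor_closed_ens_nodes]
    jump_dim_le_df order_trans by blast

lemma df_ge_add_card_split_pairs:
  assumes valid: "\<forall>T\<in>set E. valid_tree d (grid d B) T"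
    and "n + card P \<le> jump_dim d B E (jumps_at P)" "P \<subseteq> split_pairs (ens_nodes E)"
  shows "n + card (split_pairs (ens_nodes E)) \<le> df d B E"
proof -
  let ?SP = "split_pairs (ens_nodes E)"
  have fin: "finite ?SP"
    by (rule finite_split_pairs[OF finite_ens_nodes])
  have "jump_dim d B E (jumps_at P) + card (?SP - P) \<le> jump_dim d B E (jumps_at (P \<union> ?SP))"
    by (rule jump_dim_add_split_pairs[OF valid finite_ens_nodes order_refl ancestor_closed_ens_nodes])
  moreover have "jump_dim d B E (jumps_at (P \<union> ?SP)) \<le> df d B E"
    by (rule jump_dim_le_df)
  moreover have "card (?SP - P) = card ?SP - card P"
    using card_Diff_subset finite_subset assms(3) fin by blast
  moreover have "card P \<le> card ?SP"
    by (rule card_mono[OF fin assms(3)])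
  ultimately show ?thesis
    using assms(2) by linarith
qed

definition path_ancestors :: "tree \<Rightarrow> path \<Rightarrow> ens_node set" where
  "path_ancestors T a = (\<lambda>i. (T, take i a, fst (a!i), fst (snd (a!i)))) ` {..<length a}"

lemma finite_path_ancestors: "finite (path_ancestors T a)"
  unfolding path_ancestors_def by simp

lemma ancestor_closed_path_ancestors: "ancestor_closed (path_ancestors T a)"
  unfolding ancestor_closed_def path_ancestors_def by (auto simp: min_def)

lemma path_ancestors_subset: "(T,a,v,t) \<in> ens_nodes E \<Longrightarrow> path_ancestors T a \<subseteq> ens_nodes E"
  unfolding path_ancestors_def using ancestor_closedD[OF ancestor_closed_ens_nodes] by blast

lemma split_pairs_path_ancestors: "split_pairs (path_ancestors T a) = path_splits a"
proof -
  have "set a = (!) a ` {..<length a}"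
    by (auto simp: set_conv_nth)
  then show ?thesis
    by (simp add: split_pairs_def path_ancestors_def path_splits_def image_image case_prod_beta)
qed

lemma ancestor_closed_Un: "ancestor_closed N1 \<Longrightarrow> ancestor_closed N2 \<Longrightarrow> ancestor_closed (N1 \<union> N2)"
  unfolding ancestor_closed_def by blast

lemma split_pairs_Un: "split_pairs (N1 \<union> N2) = split_pairs N1 \<union> split_pairs N2"
  unfolding split_pairs_def by (rule image_Un)

lemma exists_adjacent_outside_cell:
  assumes valid: "\<forall>T\<in>set E. valid_tree d (grid d B) T"
    and M: "(T,a,j,b) \<in> ens_nodes E" and anc: "(i,c,s) \<in> set a" "i \<noteq> j"
  shows "\<exists>y. adjacent d B j b y \<and> y \<notin> cell (grid d B) a"
proof -
  obtain k where k: "k < length a" "a!k = (i,c,s)"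
    using anc(1) by (auto simp: in_set_conv_nth)
  then have "(T, take k a, i, c) \<in> ens_nodes E"
    using ancestor_closedD[OF ancestor_closed_ens_nodes M k(1)] by simp
  then obtain zi where "adjacent d B i c zi"
    using ens_node_split_witness[OF valid] by blast
  note i = adjacent_bounds[OF this]
  obtain zj where "adjacent d B j b zj"
    using ens_node_split_witness[OF valid M] by blast
  note j = adjacent_bounds[OF this]
  define y where "y = (grid_corner d)(j := b, i := if s then Suc c else c)"
  have "1 \<le> B"
    using j by simp
  then have "y \<in> grid d B" "y(j := Suc b) \<in> grid d B"
    unfolding y_def using i j anc(2)
    by (auto simp: fun_upd_twist intro!: fun_upd_in_grid grid_corner_in_grid)
  moreover have "y j = b"
    unfolding y_def using anc(2) by simp
  moreover have "(y i \<le> c) \<noteq> s"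
    unfolding y_def by simp
  then have "y \<notin> cell (grid d B) a"
    using cell_memD anc(1) by blast
  ultimately show ?thesis
    unfolding adjacent_def by blast
qed

lemma df_gt_card_split_pairs:
  assumes valid: "\<forall>T\<in>set E. valid_tree d (grid d B) T" and ne: "E \<noteq> []" "1 \<le> B"
    and M: "(T,a,j,b) \<in> ens_nodes E" and anc: "(i,c,s) \<in> set a" "i \<noteq> j"
    and g: "g \<in> Fspace d B E" "\<forall>y. adjacent d B j b y \<longrightarrow> g y \<noteq> g (y(j:=Suc b))"
  shows "2 + card (split_pairs (ens_nodes E)) \<le> df d B E"
proof -
  let ?cell = "cell (grid d B)"
  obtain y where y: "adjacent d B j b y" "y \<notin> ?cell a"
    using exists_adjacent_outside_cell[OF valid M anc] by blast
  then obtain T' a' where M': "(T',a',j,b) \<in> ens_nodes E" "y \<in> ?cell a'" "y(j:=Suc b) \<in> ?cell a'"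
    using Fspace_jump_at_node[OF g(1)] g(2) by blast
  have "y j = b"
    using y(1) unfolding adjacent_def by simp
  obtain z where z: "z \<in> ?cell a" "z j = b" "z(j:=Suc b) \<in> ?cell a"
    using ens_node_split_witness[OF valid M] unfolding adjacent_def by blast
  define N where "N = path_ancestors T a \<union> path_ancestors T' a'"
  define P where "P = path_splits a \<union> path_splits a'"
  have N: "finite N" "N \<subseteq> ens_nodes E" "ancestor_closed N" "split_pairs N = P"
    unfolding N_def P_def using path_ancestors_subset[OF M] path_ancestors_subset[OF M'(1)]
    by (auto simp: finite_path_ancestors ancestor_closed_Un ancestor_closed_path_ancestors
        split_pairs_Un split_pairs_path_ancestors)
  have jb: "(j,b) \<notin> P"
    unfolding P_def using adjacent_in_cell_not_split z M'(2,3) \<open>y j = b\<close> by blast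
  let ?Q = "jumps_at P \<union> {(j,b,y) | y. y \<in> ?cell a}"
  have "1 + card P \<le> jump_dim d B E (jumps_at P)"
    using jump_dim_ge_card_split_pairs[OF valid ne N(1-3)] N(4) by simp
  moreover have "jump_dim d B E (jumps_at P) < jump_dim d B E ?Q"
    by (rule jump_dim_less_at_node[OF M _ _ z]) (use jb in \<open>auto simp: jumps_at_def P_def\<close>)
  moreover have "jump_dim d B E ?Q < jump_dim d B E (jumps_at (insert (j,b) P))"
    by (rule jump_dim_less_at_node[OF M'(1) _ _ M'(2) \<open>y j = b\<close> M'(3)])
      (use jb y(2) in \<open>auto simp: jumps_at_def P_def\<close>)
  moreover have "card (insert (j,b) P) = Suc (card P)"
    using jb N(1,4) finite_split_pairs by fastforce
  ultimately have "2 + card (insert (j,b) P) \<le> jump_dim d B E (jumps_at (insert (j,b) P))"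
    by linarith
  moreover have "insert (j,b) P \<subseteq> split_pairs (ens_nodes E)"
    using split_pairsI[OF M] N(2,4) unfolding split_pairs_def by blast
  ultimately show ?thesis
    by (rule df_ge_add_card_split_pairs[OF valid])
qed

section \<open>Additive functions\<close>

definition breaks :: "nat \<Rightarrow> (nat \<Rightarrow> real) \<Rightarrow> nat set" where
  "breaks B f = {b\<in>{1..<B}. f b \<noteq> f (Suc b)}"

lemma finite_breaks: "finite (breaks B f)"
  unfolding breaks_def by simp

lemma breaks_empty_imp_constant:
  assumes "breaks B f = {}" "c \<in> {1..B}"
  shows "f c = f 1"
  using assms(2)
proof (induction c)
  case 0
  then show ?case by simp
next
  case (Suc c)
  show ?case
  proof (cases "c = 0")
    case False
    then have "c \<in> {1..<B}"
      using Suc.prems by simp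
    then have "f c = f (Suc c)"
      using assms(1) unfolding breaks_def by blast
    then show ?thesis
      using Suc False by simp
  qed simp
qed

lemma breaks_nonempty:
  assumes "a \<in> {1..B}" "b \<in> {1..B}" "f a \<noteq> f b"
  shows "breaks B f \<noteq> {}"
  using assms breaks_empty_imp_constant by metis

lemma telescoping_breaks:
  assumes "x \<in> {1..B}"
  shows "f x = f B + (\<Sum>b\<in>breaks B f. (f b - f (Suc b)) * of_bool (x \<le> b))"
proof -
  let ?h = "\<lambda>b. (f b - f (Suc b)) * of_bool (x \<le> b)"
  have "(\<Sum>b\<in>breaks B f. ?h b) = (\<Sum>b\<in>{1..<B}. ?h b)"
    by (rule sum.mono_neutral_left) (auto simp: breaks_def)
  also have "\<dots> = (\<Sum>b\<in>{x..<B}. f b - f (Suc b))"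
    by (rule sum.mono_neutral_cong_right) (use assms in auto)
  also have "\<dots> = - (\<Sum>b\<in>{x..<B}. f (Suc b) - f b)"
    by (simp add: sum_negf[symmetric])
  also have "\<dots> = f x - f B"
    using sum_Suc_diff'[of x B f] assms by simp
  finally show ?thesis
    by simp
qed

definition on_grid :: "nat \<Rightarrow> nat \<Rightarrow> ((nat \<Rightarrow> nat) \<Rightarrow> real) \<Rightarrow> (nat \<Rightarrow> nat) \<Rightarrow> real" where
  "on_grid d B f = (\<lambda>x. if x \<in> grid d B then f x else 0)"

lemma on_grid_additive_jump:
  assumes "finite I" "j \<in> I" "adjacent d B j b y"
  shows "on_grid d B (\<lambda>x. \<Sum>i\<in>I. fs i (x i)) y - on_grid d B (\<lambda>x. \<Sum>i\<in>I. fs i (x i)) (y(j:=Suc b))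
    = fs j b - fs j (Suc b)"
proof -
  have y: "y \<in> grid d B" "y(j:=Suc b) \<in> grid d B" "y j = b"
    using assms(3) unfolding adjacent_def by auto
  have "(\<Sum>i\<in>I. fs i (y i)) = fs j b + (\<Sum>i\<in>I-{j}. fs i (y i))"
    using sum.remove[OF assms(1,2), of "\<lambda>i. fs i (y i)"] y(3) by simp
  moreover have "(\<Sum>i\<in>I. fs i ((y(j:=Suc b)) i)) = fs j (Suc b) + (\<Sum>i\<in>I-{j}. fs i ((y(j:=Suc b)) i))"
    using sum.remove[OF assms(1,2), of "\<lambda>i. fs i ((y(j:=Suc b)) i)"] by simp
  moreover have "(\<Sum>i\<in>I-{j}. fs i ((y(j:=Suc b)) i)) = (\<Sum>i\<in>I-{j}. fs i (y i))"
    by (rule sum.cong) auto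
  ultimately show ?thesis
    unfolding on_grid_def using y(1,2) by simp
qed

lemma on_grid_additive_jumps_at_breaks:
  assumes "finite I" "j \<in> I" "b \<in> breaks B (fs j)" "adjacent d B j b y"
  shows "on_grid d B (\<lambda>x. \<Sum>i\<in>I. fs i (x i)) y \<noteq> on_grid d B (\<lambda>x. \<Sum>i\<in>I. fs i (x i)) (y(j:=Suc b))"
  using on_grid_additive_jump[OF assms(1,2,4), of fs] assms(3) unfolding breaks_def by auto

lemma breaks_subset_split_pairs:
  assumes I: "I \<subseteq> {1..d}" "finite I"
    and F: "on_grid d B (\<lambda>x. \<Sum>i\<in>I. fs i (x i)) \<in> Fspace d B E"
  shows "(SIGMA i:I. breaks B (fs i)) \<subseteq> split_pairs (ens_nodes E)"
proof clarify
  fix j b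
  assume jb: "j \<in> I" "b \<in> breaks B (fs j)"
  then have "j \<in> {1..d}" "b \<in> {1..<B}"
    using I(1) unfolding breaks_def by auto
  then have "adjacent d B j b ((grid_corner d)(j:=b))"
    unfolding adjacent_def by (auto intro!: fun_upd_in_grid grid_corner_in_grid)
  then obtain T a where "(T,a,j,b) \<in> ens_nodes E"
    using Fspace_jump_at_node[OF F] on_grid_additive_jumps_at_breaks[where fs = fs, OF I(2) jb] by blast
  then show "(j,b) \<in> split_pairs (ens_nodes E)"
    by (rule split_pairsI)
qed

lemma df_ge_card_breaks:
  assumes "E \<in> TSE d B l" "1 \<le> l" "1 \<le> B" "I \<subseteq> {1..d}" "finite I"
    and "on_grid d B (\<lambda>x. \<Sum>i\<in>I. fs i (x i)) \<in> Fspace d B E"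
  shows "1 + card (SIGMA i:I. breaks B (fs i)) \<le> df d B E"
proof -
  have "\<forall>T\<in>set E. valid_tree d (grid d B) T" "E \<noteq> []"
    using assms(1,2) unfolding TSE_def by auto
  then have "1 + card (split_pairs (ens_nodes E)) \<le> df d B E"
    using df_ge_card_split_pairs assms(3) by blast
  moreover have "card (SIGMA i:I. breaks B (fs i)) \<le> card (split_pairs (ens_nodes E))"
    by (rule card_mono[OF finite_split_pairs[OF finite_ens_nodes] breaks_subset_split_pairs[OF assms(4-6)]])
  ultimately show ?thesis
    by linarith
qed

section \<open>Ensembles of threshold trees\<close>

definition grid_le :: "nat \<Rightarrow> nat \<Rightarrow> nat \<Rightarrow> nat \<Rightarrow> (nat \<Rightarrow> nat) set" where
  "grid_le d B i u = {x\<in>grid d B. x i \<le> u}"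

lemma grid_le_split: "b \<le> u \<Longrightarrow> {x\<in>grid_le d B i u. x i \<le> b} = grid_le d B i b"
  unfolding grid_le_def by auto

lemma grid_le_top: "i \<in> {1..d} \<Longrightarrow> grid_le d B i B = grid d B"
  unfolding grid_le_def grid_def by auto

fun cut_tree :: "nat \<Rightarrow> nat set \<Rightarrow> nat \<Rightarrow> tree" where
  "cut_tree i K 0 = Leaf"
| "cut_tree i K (Suc n) = (if Suc n \<in> K then Node i (Suc n) (cut_tree i K n) Leaf else cut_tree i K n)"

lemma valid_cut_tree:
  assumes "i \<in> {1..d}" "n < u" "u \<le> B"
  shows "valid_tree d (grid_le d B i u) (cut_tree i K n)"
  using assms(2,3)
proof (induction n arbitrary: u)
  case 0
  then show ?case by simp
next
  case (Suc n)
  show ?case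
  proof (cases "Suc n \<in> K")
    case True
    have "(grid_corner d)(i:=1) \<in> grid_le d B i (Suc n)"
      "(grid_corner d)(i:=Suc (Suc n)) \<in> grid_le d B i u"
      unfolding grid_le_def using assms(1) Suc.prems
      by (auto intro!: fun_upd_in_grid grid_corner_in_grid)
    then have "{x\<in>grid_le d B i u. x i \<le> Suc n} \<noteq> {}" "{x\<in>grid_le d B i u. Suc n < x i} \<noteq> {}"
      using grid_le_split[of "Suc n" u d B i] Suc.prems by auto
    moreover have "valid_tree d (grid_le d B i (Suc n)) (cut_tree i K n)"
      using Suc.IH Suc.prems by simp
    ultimately show ?thesis
      using grid_le_split[of "Suc n" u d B i] Suc.prems assms(1) True by simp
  next
    case False
    then show ?thesis
      using Suc.IH[of u] Suc.prems by simp
  qed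
qed

lemma leaf_indicators_cut_tree:
  assumes "n < u"
  shows "(\<lambda>A. indicator A) ` leaves (grid_le d B i u) (cut_tree i K n)
    \<subseteq> funs.span (insert (indicator (grid_le d B i u)) ((\<lambda>b. indicator (grid_le d B i b)) ` K))"
  using assms
proof (induction n arbitrary: u)
  case 0
  then show ?case by (simp add: funs.span_base)
next
  case (Suc n)
  let ?G = "\<lambda>u. insert (indicator (grid_le d B i u)) ((\<lambda>b. indicator (grid_le d B i b)) ` K)"
  show ?case
  proof (cases "Suc n \<in> K")
    case True
    have "funs.span (?G (Suc n)) \<subseteq> funs.span (?G u)"
      using True by (intro funs.span_mono) auto
    then have left: "(\<lambda>A. indicator A) ` leaves (grid_le d B i (Suc n)) (cut_tree i K n) \<subseteq> funs.span (?G u)"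
      using Suc.IH[of "Suc n"] by blast
    have "indicator {x\<in>grid_le d B i u. Suc n < x i}
        = indicator (grid_le d B i u) - (indicator (grid_le d B i (Suc n)) :: _ \<Rightarrow> real)"
      using Suc.prems by (auto simp: fun_eq_iff indicator_def grid_le_def)
    moreover have "indicator (grid_le d B i u) \<in> funs.span (?G u)"
      "indicator (grid_le d B i (Suc n)) \<in> funs.span (?G u)"
      using True by (auto intro: funs.span_base)
    ultimately have "indicator {x\<in>grid_le d B i u. Suc n < x i} \<in> funs.span (?G u)"
      by (simp add: funs.span_diff)
    then show ?thesis
      using left True grid_le_split[of "Suc n" u d B i] Suc.prems by simp
  next
    case False
    then show ?thesis
      using Suc by simp
  qed
qed

lemma grid_le_in_leaf_span_cut_tree:
  assumes "b \<in> K" "1 \<le> b" "b \<le> n" "n < u"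
  shows "indicator (grid_le d B i b) \<in> leaf_span (grid_le d B i u) (cut_tree i K n)"
  using assms(3,4)
proof (induction n arbitrary: u)
  case 0
  then show ?case using assms(2) by simp
next
  case (Suc n)
  show ?case
  proof (cases "Suc n \<in> K")
    case True
    have sub: "leaf_span (grid_le d B i (Suc n)) (cut_tree i K n) \<subseteq> leaf_span (grid_le d B i u) (cut_tree i K (Suc n))"
      using leaf_span_children(1)[of "grid_le d B i u" i "Suc n" "cut_tree i K n" Leaf]
        grid_le_split[of "Suc n" u d B i] True Suc.prems by simp
    show ?thesis
    proof (cases "b = Suc n")
      case True
      then show ?thesis
        using sub indicator_in_leaf_span by blast
    next
      case False
      then have "b \<le> n"
        using Suc.prems by simp
      then have "indicator (grid_le d B i b) \<in> leaf_span (grid_le d B i (Suc n)) (cut_tree i K n)"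
        using Suc.IH[of "Suc n"] by simp
      then show ?thesis
        using sub by blast
    qed
  next
    case False
    then have "b \<noteq> Suc n"
      using assms(1) by auto
    then show ?thesis
      using Suc False by simp
  qed
qed

definition break_tree :: "nat \<Rightarrow> (nat \<Rightarrow> real) \<Rightarrow> nat \<Rightarrow> tree" where
  "break_tree B f i = cut_tree i (breaks B f) (B - 1)"

definition additive_ensemble :: "nat \<Rightarrow> (nat \<Rightarrow> nat \<Rightarrow> real) \<Rightarrow> nat set \<Rightarrow> nat \<Rightarrow> tree list" where
  "additive_ensemble B fs I l =
     map (\<lambda>i. break_tree B (fs i) i) (sorted_list_of_set I) @ replicate (l - card I) Leaf"

definition break_indicators ::
    "nat \<Rightarrow> nat \<Rightarrow> (nat \<Rightarrow> nat \<Rightarrow> real) \<Rightarrow> nat set \<Rightarrow> ((nat \<Rightarrow> nat) \<Rightarrow> real) set" where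
  "break_indicators d B fs I =
     insert (indicator (grid d B)) ((\<lambda>(i,b). indicator (grid_le d B i b)) ` (SIGMA i:I. breaks B (fs i)))"

lemma set_additive_ensemble:
  "finite I \<Longrightarrow> set (additive_ensemble B fs I l) \<subseteq> (\<lambda>i. break_tree B (fs i) i) ` I \<union> {Leaf}"
  unfolding additive_ensemble_def by auto

lemma additive_ensemble_TSE:
  assumes "I \<subseteq> {1..d}" "finite I" "card I \<le> l" "1 \<le> B"
  shows "additive_ensemble B fs I l \<in> TSE d B l"
proof -
  have "valid_tree d (grid d B) (break_tree B (fs i) i)" if "i \<in> I" for i
    using valid_cut_tree[where i = i and d = d and n = "B - 1" and u = B and B = B]
      grid_le_top[of i d B] that assms(1,4)
    unfolding break_tree_def by auto
  then show ?thesis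
    using set_additive_ensemble[OF assms(2)] assms(2,3)
    unfolding TSE_def additive_ensemble_def by auto
qed

lemma Fspace_additive_ensemble_subset:
  assumes I: "I \<subseteq> {1..d}" "finite I" and "1 \<le> B"
  shows "Fspace d B (additive_ensemble B fs I l) \<subseteq> funs.span (break_indicators d B fs I)"
proof -
  have grid: "indicator (grid d B) \<in> funs.span (break_indicators d B fs I)"
    unfolding break_indicators_def by (simp add: funs.span_base)
  have "indicator L \<in> funs.span (break_indicators d B fs I)"
    if T: "T \<in> set (additive_ensemble B fs I l)" and L: "L \<in> leaves (grid d B) T" for T L
  proof -
    consider i where "i \<in> I" "T = break_tree B (fs i) i" | "T = Leaf"
      using T set_additive_ensemble[OF I(2), where B = B and fs = fs and l = l] by blast
    then show ?thesis
    proof cases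
      case 1
      then have top: "grid_le d B i B = grid d B"
        using I(1) grid_le_top by blast
      have "funs.span (insert (indicator (grid_le d B i B)) ((\<lambda>b. indicator (grid_le d B i b)) ` breaks B (fs i)))
          \<subseteq> funs.span (break_indicators d B fs I)"
        using 1(1) top unfolding break_indicators_def by (intro funs.span_mono) auto
      then show ?thesis
        using leaf_indicators_cut_tree[where n = "B - 1" and u = B and d = d and B = B and i = i
            and K = "breaks B (fs i)"] L 1(2) assms(3) top
        unfolding break_tree_def by auto
    next
      case 2
      then show ?thesis
        using L grid by simp
    qed
  qed
  then show ?thesis
    unfolding Fspace_def by (intro funs.span_minimal) auto
qed

lemma break_indicators_subset_Fspace:
  assumes I: "I \<subseteq> {1..d}" "finite I" "I \<noteq> {}" and "1 \<le> B"
  shows "break_indicators d B fs I \<subseteq> Fspace d B (additive_ensemble B fs I l)"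
proof
  let ?E = "additive_ensemble B fs I l"
  fix h
  assume "h \<in> break_indicators d B fs I"
  then consider "h = indicator (grid d B)"
    | i b where "i \<in> I" "b \<in> breaks B (fs i)" "h = indicator (grid_le d B i b)"
    unfolding break_indicators_def by auto
  then show "h \<in> Fspace d B ?E"
  proof cases
    case 1
    obtain i where "i \<in> I"
      using I(3) by blast
    then have "break_tree B (fs i) i \<in> set ?E"
      using I(2) unfolding additive_ensemble_def by simp
    then show ?thesis
      using 1 indicator_in_leaf_span leaf_span_subset_Fspace by blast
  next
    case 2
    then have "i \<in> {1..d}" "1 \<le> b" "b \<le> B - 1"
      using I(1) unfolding breaks_def by auto
    then have "h \<in> leaf_span (grid d B) (break_tree B (fs i) i)"
      using grid_le_in_leaf_span_cut_tree[where b = b and K = "breaks B (fs i)" and n = "B - 1"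
          and u = B and d = d and B = B and i = i] 2(2,3) assms(4) grid_le_top
      unfolding break_tree_def by auto
    moreover have "break_tree B (fs i) i \<in> set ?E"
      using 2(1) I(2) unfolding additive_ensemble_def by simp
    ultimately show ?thesis
      using leaf_span_subset_Fspace by blast
  qed
qed

lemma on_grid_additive_in_span:
  assumes "I \<subseteq> {1..d}" "finite I"
  shows "on_grid d B (\<lambda>x. \<Sum>i\<in>I. fs i (x i)) \<in> funs.span (break_indicators d B fs I)"
proof -
  define F where "F = (\<Sum>i\<in>I. fscale (fs i B) (indicator (grid d B)) +
     (\<Sum>b\<in>breaks B (fs i). fscale (fs i b - fs i (Suc b)) (indicator (grid_le d B i b))))"
  have "on_grid d B (\<lambda>x. \<Sum>i\<in>I. fs i (x i)) x = F x" for x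
  proof (cases "x \<in> grid d B")
    case True
    then have "x i \<in> {1..B}" if "i \<in> I" for i
      using assms(1) that unfolding grid_def by auto
    then have "(\<Sum>i\<in>I. fs i (x i))
        = (\<Sum>i\<in>I. fs i B + (\<Sum>b\<in>breaks B (fs i). (fs i b - fs i (Suc b)) * of_bool (x i \<le> b)))"
      using telescoping_breaks by (intro sum.cong) auto
    then show ?thesis
      using True unfolding F_def on_grid_def
      by (simp add: fscale_def sum_apply indicator_def grid_le_def)
  next
    case False
    then show ?thesis
      unfolding F_def on_grid_def by (simp add: fscale_def sum_apply indicator_def grid_le_def)
  qed
  moreover have "F \<in> funs.span (break_indicators d B fs I)"
    unfolding F_def break_indicators_def
    by (intro funs.span_sum funs.span_add funs.span_scale funs.span_base) auto
  ultimately show ?thesis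
    by (metis ext)
qed

lemma df_additive_ensemble_le:
  assumes "I \<subseteq> {1..d}" "finite I" "1 \<le> B"
  shows "df d B (additive_ensemble B fs I l) \<le> 1 + card (SIGMA i:I. breaks B (fs i))"
proof -
  have fin: "finite (SIGMA i:I. breaks B (fs i))"
    using assms(2) finite_breaks by blast
  have "df d B (additive_ensemble B fs I l) \<le> card (break_indicators d B fs I)"
    unfolding df_def
    by (rule funs.dim_le_card[OF Fspace_additive_ensemble_subset[OF assms]]) (simp add: break_indicators_def fin)
  also have "\<dots> \<le> 1 + card (SIGMA i:I. breaks B (fs i))"
    unfolding break_indicators_def using card_image_le[OF fin]
    by (metis (no_types, lifting) card_insert_if finite_imageI fin le_SucI plus_1_eq_Suc Suc_le_mono)
  finally show ?thesis .
qed

lemma dimL_additive: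
  assumes I: "I \<subseteq> {1..d}" "finite I" "I \<noteq> {}" and "card I \<le> l" "1 \<le> B"
  shows "dimL d B l (\<lambda>x. \<Sum>i\<in>I. fs i (x i)) = 1 + card (SIGMA i:I. breaks B (fs i))"
  unfolding dimL_def
proof (rule Least_equality)
  have "1 \<le> l"
    using assms(4) I(2,3) by (meson card_0_eq le_trans less_one not_le)
  let ?E = "additive_ensemble B fs I l"
  have "?E \<in> TSE d B l"
    by (rule additive_ensemble_TSE[OF I(1,2) assms(4,5)])
  moreover have "funs.span (break_indicators d B fs I) \<subseteq> Fspace d B ?E"
    unfolding Fspace_def
    by (rule funs.span_minimal[OF break_indicators_subset_Fspace[OF I assms(5), unfolded Fspace_def]]) simp
  then have F: "on_grid d B (\<lambda>x. \<Sum>i\<in>I. fs i (x i)) \<in> Fspace d B ?E"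
    using on_grid_additive_in_span[OF I(1,2)] by blast
  moreover have "df d B ?E = 1 + card (SIGMA i:I. breaks B (fs i))"
    using df_additive_ensemble_le[OF I(1,2) assms(5), where fs = fs and l = l]
      df_ge_card_breaks[OF calculation(1) \<open>1 \<le> l\<close> assms(5) I(1,2) F]
    by linarith
  ultimately show "\<exists>E\<in>TSE d B l. (\<lambda>x. if x \<in> grid d B then \<Sum>i\<in>I. fs i (x i) else 0) \<in> Fspace d B E
      \<and> df d B E = 1 + card (SIGMA i:I. breaks B (fs i))"
    unfolding on_grid_def by blast
  show "1 + card (SIGMA i:I. breaks B (fs i)) \<le> n"
    if "\<exists>E\<in>TSE d B l. (\<lambda>x. if x \<in> grid d B then \<Sum>i\<in>I. fs i (x i) else 0) \<in> Fspace d B E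
      \<and> df d B E = n" for n
    using that df_ge_card_breaks[OF _ \<open>1 \<le> l\<close> assms(5) I(1,2)] unfolding on_grid_def by blast
qed

section \<open>Fewer trees than coordinates\<close>

fun slice_tree :: "nat \<Rightarrow> nat \<Rightarrow> tree \<Rightarrow> tree" where
  "slice_tree i 0 T = T"
| "slice_tree i (Suc n) T = Node i (Suc n) (slice_tree i n T) T"

fun full_tree :: "nat \<Rightarrow> nat list \<Rightarrow> tree" where
  "full_tree B [] = Leaf"
| "full_tree B (i # is) = slice_tree i (B - 1) (full_tree B is)"

lemma valid_slice_tree:
  assumes "i \<in> {1..d}" "\<forall>x\<in>D. 1 \<le> x i"
    and "\<forall>c\<in>{1..Suc n}. {x\<in>D. x i = c} \<noteq> {} \<and> valid_tree d {x\<in>D. x i = c} T"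
  shows "valid_tree d {x\<in>D. x i \<le> Suc n} (slice_tree i n T)"
  using assms(3)
proof (induction n)
  case 0
  have "{x\<in>D. x i \<le> Suc 0} = {x\<in>D. x i = 1}"
    using assms(2) by force
  then show ?case
    using "0" by simp
next
  case (Suc n)
  have "{x\<in>{x\<in>D. x i \<le> Suc (Suc n)}. x i \<le> Suc n} = {x\<in>D. x i \<le> Suc n}"
    "{x\<in>{x\<in>D. x i \<le> Suc (Suc n)}. Suc n < x i} = {x\<in>D. x i = Suc (Suc n)}"
    by auto
  moreover have "{x\<in>D. x i = 1} \<noteq> {}"
    using Suc.prems by simp
  then have "{x\<in>D. x i \<le> Suc n} \<noteq> {}"
    by auto
  moreover have "{x\<in>D. x i = Suc (Suc n)} \<noteq> {}" "valid_tree d {x\<in>D. x i = Suc (Suc n)} T"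
    using Suc.prems by simp_all
  moreover have "valid_tree d {x\<in>D. x i \<le> Suc n} (slice_tree i n T)"
    using Suc.IH Suc.prems by simp
  ultimately show ?case
    using assms(1) by simp
qed

lemma fun_upd_closed_slice:
  assumes "i \<notin> K" "\<forall>k\<in>K. \<forall>x\<in>D. \<forall>c\<in>{1..B}. x(k:=c) \<in> D"
  shows "\<forall>k\<in>K. \<forall>x\<in>{x\<in>D. x i = c}. \<forall>c'\<in>{1..B}. x(k:=c') \<in> {x\<in>D. x i = c}"
proof (intro ballI)
  fix k x c'
  assume k: "k \<in> K" and x: "x \<in> {x\<in>D. x i = c}" and c': "c' \<in> {1..B}"
  then have "x(k:=c') \<in> D"
    using assms(2) by blast
  moreover have "k \<noteq> i"
    using assms(1) k by blast
  then have "(x(k:=c')) i = c"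
    using x by simp
  ultimately show "x(k:=c') \<in> {x\<in>D. x i = c}"
    by blast
qed

lemma valid_full_tree:
  assumes "distinct is" "set is \<subseteq> {1..d}" "D \<subseteq> grid d B" "D \<noteq> {}"
    and "\<forall>k\<in>set is. \<forall>x\<in>D. \<forall>c\<in>{1..B}. x(k:=c) \<in> D"
  shows "valid_tree d D (full_tree B is)"
  using assms
proof (induction "is" arbitrary: D)
  case Nil
  then show ?case by simp
next
  case (Cons i "is")
  have i: "i \<in> {1..d}"
    using Cons.prems(2) by simp
  have D: "\<forall>x\<in>D. 1 \<le> x i \<and> x i \<le> B"
    using Cons.prems(3) i grid_coord by blast
  obtain x0 where "x0 \<in> D"
    using Cons.prems(4) by blast
  then have "1 \<le> B"
    using D by fastforce
  have upd: "\<forall>x\<in>D. \<forall>c\<in>{1..B}. x(i:=c) \<in> D" "\<forall>k\<in>set is. \<forall>x\<in>D. \<forall>c\<in>{1..B}. x(k:=c) \<in> D"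
    using Cons.prems(5) unfolding list.set ball_simps by blast+
  have slice: "{x\<in>D. x i = c} \<noteq> {} \<and> valid_tree d {x\<in>D. x i = c} (full_tree B is)"
    if "c \<in> {1..B}" for c
  proof
    have "x0(i:=c) \<in> D"
      using upd(1) \<open>x0 \<in> D\<close> that by blast
    moreover have "(x0(i:=c)) i = c"
      by simp
    ultimately show ne: "{x\<in>D. x i = c} \<noteq> {}"
      by blast
    show "valid_tree d {x\<in>D. x i = c} (full_tree B is)"
    proof (rule Cons.IH)
      show "distinct is" "set is \<subseteq> {1..d}"
        using Cons.prems(1,2) by simp_all
      show "{x\<in>D. x i = c} \<subseteq> grid d B"
        using Cons.prems(3) by blast
      show "\<forall>k\<in>set is. \<forall>x\<in>{x\<in>D. x i = c}. \<forall>c'\<in>{1..B}. x(k:=c') \<in> {x\<in>D. x i = c}"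
        by (rule fun_upd_closed_slice[OF _ upd(2)]) (use Cons.prems(1) in simp)
    qed (rule ne)
  qed
  have "Suc (B - 1) = B"
    using \<open>1 \<le> B\<close> by simp
  then have "valid_tree d {x\<in>D. x i \<le> B} (slice_tree i (B - 1) (full_tree B is))"
    using valid_slice_tree[OF i, of D "B - 1" "full_tree B is"] D slice by simp
  moreover have "{x\<in>D. x i \<le> B} = D"
    using D by blast
  ultimately show ?case
    by simp
qed

lemma leaves_slice_tree:
  assumes "L \<in> leaves D (slice_tree i n T)" "\<forall>x\<in>D. 1 \<le> x i \<and> x i \<le> Suc n"
  shows "\<exists>D'\<subseteq>D. \<exists>c. L \<in> leaves D' T \<and> (\<forall>x\<in>D'. x i = c)"
  using assms
proof (induction n arbitrary: D)
  case 0
  have "x i = 1" if "x \<in> D" for x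
  proof -
    have "1 \<le> x i" "x i \<le> 1"
      using "0.prems"(2) that by auto
    then show ?thesis
      by linarith
  qed
  then show ?case
    using "0.prems"(1) by auto
next
  case (Suc n)
  from Suc.prems(1) consider "L \<in> leaves {x\<in>D. x i \<le> Suc n} (slice_tree i n T)"
    | "L \<in> leaves {x\<in>D. Suc n < x i} T"
    by auto
  then show ?case
  proof cases
    case 1
    have "\<forall>x\<in>{x\<in>D. x i \<le> Suc n}. 1 \<le> x i \<and> x i \<le> Suc n"
      using Suc.prems(2) by simp
    then obtain D' c where D': "D' \<subseteq> {x\<in>D. x i \<le> Suc n}" "L \<in> leaves D' T" "\<forall>x\<in>D'. x i = c"
      using Suc.IH[OF 1] by blast
    from D'(1) have "D' \<subseteq> D"
      by blast
    with D'(2,3) show ?thesis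
      by blast
  next
    case 2
    let ?D' = "{x\<in>D. Suc n < x i}"
    have "x i = Suc (Suc n)" if "x \<in> ?D'" for x
    proof -
      have "Suc n < x i" "x i \<le> Suc (Suc n)"
        using Suc.prems(2) that by auto
      then show ?thesis
        by linarith
    qed
    moreover have "?D' \<subseteq> D"
      by blast
    ultimately show ?thesis
      using 2 by blast
  qed
qed

lemma leaves_full_tree:
  assumes "L \<in> leaves D (full_tree B is)" "D \<subseteq> grid d B" "set is \<subseteq> {1..d}"
  shows "\<forall>k\<in>set is. \<forall>x\<in>L. \<forall>x'\<in>L. x k = x' k"
  using assms
proof (induction "is" arbitrary: D L)
  case Nil
  then show ?case by simp
next
  case (Cons i "is")
  have "\<forall>x\<in>D. 1 \<le> x i \<and> x i \<le> Suc (B - 1)"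
  proof
    fix x
    assume "x \<in> D"
    moreover have "i \<in> {1..d}"
      using Cons.prems(3) by simp
    ultimately have "1 \<le> x i \<and> x i \<le> B"
      using grid_coord Cons.prems(2) by blast
    then show "1 \<le> x i \<and> x i \<le> Suc (B - 1)"
      by linarith
  qed
  moreover have "L \<in> leaves D (slice_tree i (B - 1) (full_tree B is))"
    using Cons.prems(1) by simp
  ultimately obtain D' c where D': "D' \<subseteq> D" "L \<in> leaves D' (full_tree B is)" "\<forall>x\<in>D'. x i = c"
    using leaves_slice_tree by metis
  have "D' \<subseteq> grid d B" "set is \<subseteq> {1..d}"
    using D'(1) Cons.prems(2,3) by auto
  then have "\<forall>k\<in>set is. \<forall>x\<in>L. \<forall>x'\<in>L. x k = x' k"
    by (rule Cons.IH[OF D'(2)])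
  moreover have "\<forall>x\<in>L. \<forall>x'\<in>L. x i = x' i"
  proof (intro ballI)
    fix x x'
    assume "x \<in> L" "x' \<in> L"
    then have "x \<in> D'" "x' \<in> D'"
      using D'(2) leaves_subset by blast+
    then have "x i = c" "x' i = c"
      using D'(3) by blast+
    then show "x i = x' i"
      by simp
  qed
  ultimately show ?case
    by simp
qed

lemma full_tree_separates_points:
  assumes L: "L \<in> leaves (grid d B) (full_tree B [1..<Suc d])" and x: "x \<in> L" "x' \<in> L"
  shows "x = x'"
proof
  fix k
  have set_is: "set [1..<Suc d] = {1..d}"
    by auto
  have grid: "x \<in> grid d B" "x' \<in> grid d B"
    using L x leaves_subset by blast+
  have coords: "\<forall>k\<in>set [1..<Suc d]. \<forall>x\<in>L. \<forall>x'\<in>L. x k = x' k"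
    by (rule leaves_full_tree[OF L order_refl]) (simp only: set_is order_refl)
  show "x k = x' k"
  proof (cases "k \<in> {1..d}")
    case True
    then show ?thesis
      using coords x unfolding set_is by blast
  next
    case False
    then show ?thesis
      using grid unfolding grid_def by simp
  qed
qed

lemma exists_TSE_representing:
  assumes "1 \<le> l" "1 \<le> B"
  shows "\<exists>E\<in>TSE d B l. on_grid d B g \<in> Fspace d B E"
proof -
  let ?T = "full_tree B [1..<Suc d]"
  have set_is: "set [1..<Suc d] = {1..d}"
    by auto
  have "\<forall>k\<in>set [1..<Suc d]. \<forall>x\<in>grid d B. \<forall>c\<in>{1..B}. x(k:=c) \<in> grid d B"
    unfolding set_is using fun_upd_in_grid by blast
  then have valid: "valid_tree d (grid d B) ?T"
    by (intro valid_full_tree[OF distinct_upt _ order_refl])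
      (use set_is grid_corner_in_grid[OF assms(2), of d] in auto)
  have "\<forall>L\<in>leaves (grid d B) ?T. \<forall>x\<in>L. \<forall>x'\<in>L. g x = g x'"
    using full_tree_separates_points by blast
  then have "on_grid d B g \<in> leaf_span (grid d B) ?T"
    unfolding on_grid_def by (rule restriction_in_leaf_span)
  moreover have "replicate l ?T \<in> TSE d B l"
    using valid unfolding TSE_def by simp
  moreover have "?T \<in> set (replicate l ?T)"
    using assms(1) by simp
  ultimately show ?thesis
    using leaf_span_subset_Fspace by blast
qed

lemma node_below_other_coordinate:
  assumes "(a1,v1,t1) \<in> nodes T" "(a2,v2,t2) \<in> nodes T" "v1 \<noteq> v2"
  obtains a v t v' t' s where "(a,v,t) \<in> nodes T" "(v',t',s) \<in> set a" "v' \<noteq> v"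
proof (cases T)
  case Leaf
  then show ?thesis
    using assms(1) by simp
next
  case (Node v0 t0 L R)
  have below_root: "\<exists>s. (v0,t0,s) \<in> set a" if "(a,v,t) \<in> nodes T" "v \<noteq> v0" for a v t
    using that unfolding Node by (elim nodes_NodeE) auto
  show ?thesis
  proof (cases "v1 = v0")
    case True
    then obtain s where "(v0,t0,s) \<in> set a2"
      using below_root[OF assms(2)] assms(3) by blast
    then show ?thesis
      by (rule that[OF assms(2)]) (use assms(3) True in simp)
  next
    case False
    then obtain s where "(v0,t0,s) \<in> set a1"
      using below_root[OF assms(1)] by blast
    then show ?thesis
      by (rule that[OF assms(1)]) (use False in simp)
  qed
qed

lemma tree_splitting_two_coordinates:
  assumes "finite I" "length E < card I" "\<forall>i\<in>I. \<exists>T\<in>set E. \<exists>a t. (a,i,t) \<in> nodes T"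
  obtains T a v t v' t' s where "T \<in> set E" "(a,v,t) \<in> nodes T" "(v',t',s) \<in> set a" "v' \<noteq> v"
proof -
  have "\<forall>i\<in>I. \<exists>T. T \<in> set E \<and> (\<exists>a t. (a,i,t) \<in> nodes T)"
    using assms(3) by blast
  then obtain tau where tau: "\<forall>i\<in>I. tau i \<in> set E \<and> (\<exists>a t. (a,i,t) \<in> nodes (tau i))"
    by (auto dest: bchoice)
  have "\<not> inj_on tau I"
  proof
    assume "inj_on tau I"
    then have "card I = card (tau ` I)"
      by (simp add: card_image)
    also have "\<dots> \<le> card (set E)"
      using tau by (intro card_mono) auto
    also have "\<dots> \<le> length E"
      by (rule card_length)
    finally show False
      using assms(2) by simp
  qed
  then obtain i1 i2 where i: "i1 \<in> I" "i2 \<in> I" "i1 \<noteq> i2" "tau i1 = tau i2"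
    unfolding inj_on_def by blast
  obtain a1 t1 where n1: "(a1,i1,t1) \<in> nodes (tau i1)"
    using tau i(1) by blast
  obtain a2 t2 where n2: "(a2,i2,t2) \<in> nodes (tau i1)"
    using tau i(2) unfolding i(4) by blast
  obtain a v t v' t' s where "(a,v,t) \<in> nodes (tau i1)" "(v',t',s) \<in> set a" "v' \<noteq> v"
    by (rule node_below_other_coordinate[OF n1 n2 i(3)])
  moreover have "tau i1 \<in> set E"
    using tau i(1) by blast
  ultimately show ?thesis
    using that by blast
qed

lemma split_coordinates_if_breaks:
  assumes "(SIGMA i:I. breaks B (fs i)) \<subseteq> split_pairs (ens_nodes E)" "\<forall>i\<in>I. breaks B (fs i) \<noteq> {}"
  shows "\<forall>i\<in>I. \<exists>T\<in>set E. \<exists>a t. (a,i,t) \<in> nodes T"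
proof
  fix i
  assume "i \<in> I"
  then obtain b where "b \<in> breaks B (fs i)"
    using assms(2) by blast
  then have "(i,b) \<in> split_pairs (ens_nodes E)"
    using \<open>i \<in> I\<close> assms(1) by blast
  then obtain T a where "(T,a,i,b) \<in> ens_nodes E"
    by (rule split_pairsE)
  then show "\<exists>T\<in>set E. \<exists>a t. (a,i,t) \<in> nodes T"
    unfolding ens_nodes_def by blast
qed

lemma df_gt_card_breaks:
  assumes E: "E \<in> TSE d B l" "1 \<le> l" "l < card I" and I: "I \<subseteq> {1..d}" "finite I"
    and ne: "\<forall>i\<in>I. breaks B (fs i) \<noteq> {}"
    and F: "on_grid d B (\<lambda>x. \<Sum>i\<in>I. fs i (x i)) \<in> Fspace d B E"
  shows "2 + card (SIGMA i:I. breaks B (fs i)) \<le> df d B E"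
proof -
  let ?K = "SIGMA i:I. breaks B (fs i)" and ?SP = "split_pairs (ens_nodes E)"
  have valid: "\<forall>T\<in>set E. valid_tree d (grid d B) T" and "length E = l"
    using E(1) unfolding TSE_def by auto
  then have "E \<noteq> []" "length E < card I"
    using E(2,3) by auto
  have "I \<noteq> {}"
    using E(2,3) by auto
  then obtain i0 b0 where "b0 \<in> breaks B (fs i0)"
    using ne by blast
  then have "1 \<le> B"
    unfolding breaks_def by simp
  have K: "?K \<subseteq> ?SP"
    by (rule breaks_subset_split_pairs[OF I F])
  show ?thesis
  proof (cases "?K = ?SP")
    case False
    then have "card ?K < card ?SP"
      using K finite_split_pairs[OF finite_ens_nodes] by (simp add: psubsetI psubset_card_mono)
    then show ?thesis
      using df_ge_card_split_pairs[OF valid \<open>E \<noteq> []\<close> \<open>1 \<le> B\<close>] by linarith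
  next
    case True
    obtain T a v t v' t' s
      where T: "T \<in> set E" "(a,v,t) \<in> nodes T" "(v',t',s) \<in> set a" "v' \<noteq> v"
      by (rule tree_splitting_two_coordinates[OF I(2) \<open>length E < card I\<close> split_coordinates_if_breaks[OF K ne]])
    then have M: "(T,a,v,t) \<in> ens_nodes E"
      unfolding ens_nodes_def by simp
    then have "(v,t) \<in> ?K"
      using split_pairsI[OF M] True by simp
    then have "v \<in> I" "t \<in> breaks B (fs v)"
      by auto
    then have "\<forall>y. adjacent d B v t y \<longrightarrow> on_grid d B (\<lambda>x. \<Sum>i\<in>I. fs i (x i)) y
        \<noteq> on_grid d B (\<lambda>x. \<Sum>i\<in>I. fs i (x i)) (y(v:=Suc t))"
      using on_grid_additive_jumps_at_breaks[OF I(2)] by blast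
    then show ?thesis
      using df_gt_card_split_pairs[OF valid \<open>E \<noteq> []\<close> \<open>1 \<le> B\<close> M T(3,4) F] True by simp
  qed
qed

lemma dimL_additive_few_trees:
  assumes "1 \<le> l" "l < card I" "I \<subseteq> {1..d}" "finite I" "\<forall>i\<in>I. breaks B (fs i) \<noteq> {}"
  shows "2 + card (SIGMA i:I. breaks B (fs i)) \<le> dimL d B l (\<lambda>x. \<Sum>i\<in>I. fs i (x i))"
proof -
  let ?f = "\<lambda>x. \<Sum>i\<in>I. fs i (x i)"
  let ?P = "\<lambda>n. \<exists>E\<in>TSE d B l. on_grid d B ?f \<in> Fspace d B E \<and> df d B E = n"
  have "I \<noteq> {}"
    using assms(1,2) by auto
  then obtain i0 b0 where "b0 \<in> breaks B (fs i0)"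
    using assms(5) by blast
  then have "1 \<le> B"
    unfolding breaks_def by simp
  then obtain E0 where "E0 \<in> TSE d B l" "on_grid d B ?f \<in> Fspace d B E0"
    using exists_TSE_representing[OF assms(1)] by blast
  then have "?P (LEAST n. ?P n)"
    by (intro LeastI[of ?P "df d B E0"]) blast
  then obtain E where E: "E \<in> TSE d B l" "on_grid d B ?f \<in> Fspace d B E" "df d B E = dimL d B l ?f"
    unfolding dimL_def on_grid_def by auto
  show ?thesis
    using df_gt_card_breaks[OF E(1) assms E(2)] E(3) by simp
qed

theorem propositionF7:
  fixes d B m :: nat and fs :: "nat \<Rightarrow> nat \<Rightarrow> real"
  assumes "1 \<le> m" and "m \<le> d"
    and "\<forall>i\<in>{1..m}. \<exists>a\<in>{1..B}. \<exists>b\<in>{1..B}. fs i a \<noteq> fs i b"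
  defines "fstar \<equiv> (\<lambda>x. \<Sum>i=1..m. fs i (x i))"
  shows "(\<forall>l. 1 \<le> l \<and> l < m \<longrightarrow> dimL d B l fstar > dimL d B m fstar)
    \<and> (\<forall>l\<ge>m. dimL d B l fstar = dimL d B m fstar
         \<and> int (dimL d B m fstar) = (\<Sum>i=1..m. int (dimL d B 1 (\<lambda>x. fs i (x i)))) - int m + 1)"
proof -
  let ?K = "SIGMA i:{1..m}. breaks B (fs i)"
  have ne: "\<forall>i\<in>{1..m}. breaks B (fs i) \<noteq> {}"
    using assms(3) breaks_nonempty by blast
  then obtain b where "b \<in> breaks B (fs 1)"
    using assms(1) by fastforce
  then have B: "1 \<le> B"
    unfolding breaks_def by simp
  have I: "{1..m} \<subseteq> {1..d}" "finite {1..m}" "{1..m} \<noteq> {}"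
    using assms(1,2) by auto
  have many: "dimL d B l fstar = 1 + card ?K" if "m \<le> l" for l
    unfolding fstar_def using dimL_additive[OF I _ B] that by simp
  have few: "dimL d B m fstar < dimL d B l fstar" if "1 \<le> l" "l < m" for l
  proof -
    have "2 + card ?K \<le> dimL d B l fstar"
      unfolding fstar_def using dimL_additive_few_trees[OF that(1) _ I(1,2) ne] that(2) by simp
    then show ?thesis
      using many[of m] by simp
  qed
  have single: "dimL d B 1 (\<lambda>x. fs i (x i)) = 1 + card (breaks B (fs i))" if "i \<in> {1..m}" for i
    using dimL_additive[where I = "{i}" and l = 1 and fs = fs] that assms(2) B by (simp add: finite_breaks)
  have sum: "int (dimL d B m fstar) = (\<Sum>i=1..m. int (dimL d B 1 (\<lambda>x. fs i (x i)))) - int m + 1"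
    using many[of m] single by (simp add: finite_breaks sum.distrib)
  show ?thesis
    using few many[of m] many sum by (intro conjI allI impI) auto
qed

end
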